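(* Let $\mathbf{f}$ be a simple problem and $\mathbf{g},\mathbf{h}$ subproblems with $\mathbf{h}\subsetneq\mathbf{g}\subseteq\mathbf{f}$. Then $\partial\,\mathbf{f}X^*(\mathbf{g})\supseteq\mathbf{f}X^*(\mathbf{h})$.
   Context: A problem is a finite set $\mathbf{f}=\{f_1,\dots,f_m\}$ of functions $f_i:\mathbb{R}^n\to\mathbb{R}$ together with a feasible region $X\subseteq\mathbb{R}^n$, to be minimized simultaneously; its evaluation map is $x\mapsto(f_1(x),\dots,f_m(x))$. A subproblem $\mathbf{g}\subseteq\mathbf{f}$ is a subset of these functions (including $\emptyset$ and $\mathbf{f}$), with the same $X$; its evaluation map is $x\mapsto(f_i(x))_{f_i\in\mathbf{g}}\in\mathbb{R}^{|\mathbf{g}|}$. The Pareto set $X^*(\mathbf{g})$ is the set of $x^*\in X$ for which there is no $x\in X$ with $f_i(x)\le f_i(x^* )$ for all $f_i\in\mathbf{g}$ and $f_j(x)<f_j(x^* )$ for some $f_j\in\mathbf{g}$; by convention $X^*(\emptyset)=\emptyset$. $\mathbf{f}X^*(\mathbf{g})$ denotes the image of $X^*(\mathbf{g})$ under the evaluation map of $\mathbf{f}$. A problem $\mathbf{f}$ is simple if every subproblem $\mathbf{g}\subseteq\mathbf{f}$ with $k=|\mathbf{g}|$ objectives satisfies: (S1) $X^*(\mathbf{g})$ is homeomorphic to $\Delta^{k-1}=\{t\in[0,1]^k:\sum t_i=1\}$ (with $\Delta^{-1}=\emptyset$); (S2) the evaluation map of $\mathbf{g}$ restricted to $X^*(\mathbf{g})$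 is a topological embedding into $\mathbb{R}^k$. For a simple problem, each $\mathbf{f}X^*(\mathbf{g})$ is homeomorphic to $\Delta^{|\mathbf{g}|-1}$, hence a topological manifold with boundary; $\operatorname{Int}$ and $\partial$ denote its manifold interior and manifold boundary (for a single point, the interior is the point and the boundary is empty). All sets carry the subspace topology from Euclidean space. *)

theory Defs
  imports "HOL-Analysis.Analysis"
begin

text \<open>Points of objective space are represented as functions from the
set of objectives to real (zero outside the subproblem), with the product topology,
which on the finitely many relevant coordinates is the Euclidean topology.\<close>

type_synonym 'n objective = "real^'n \<Rightarrow> real"

definition eval_map :: "'n objective set \<Rightarrow> real^'n \<Rightarrow> ('n objective \<Rightarrow> real)" where
  "eval_map g x = (\<lambda>\<phi>. if \<phi> \<in> g then \<phi> x else 0)"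

definition pareto_set :: "(real^'n) set \<Rightarrow> 'n objective set \<Rightarrow> (real^'n) set" where
  "pareto_set X g = (if g = {} then {} else
     {xs \<in> X. \<not> (\<exists>x\<in>X. (\<forall>\<phi>\<in>g. \<phi> x \<le> \<phi> xs) \<and> (\<exists>\<phi>\<in>g. \<phi> x < \<phi> xs))})"

text \<open>Standard simplex with vertices indexed by g; homeomorphic to Delta^(|g|-1), empty for g empty.\<close>
definition std_simplex :: "'a set \<Rightarrow> ('a \<Rightarrow> real) set" where
  "std_simplex g = {t. (\<forall>i. i \<notin> g \<longrightarrow> t i = 0) \<and> (\<forall>i\<in>g. 0 \<le> t i) \<and> sum t g = 1}"

definition simple_problem :: "(real^'n) set \<Rightarrow> 'n objective set \<Rightarrow> bool" where
  "simple_problem X f \<longleftrightarrow> finite f \<and>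
     (\<forall>g\<subseteq>f. pareto_set X g homeomorphic std_simplex g \<and>
        (\<exists>e'. homeomorphism (pareto_set X g) (eval_map g ` pareto_set X g) (eval_map g) e'))"

text \<open>R^d as the subspace of nat => real with coordinates >= d vanishing.\<close>
definition euclid_space :: "nat \<Rightarrow> (nat \<Rightarrow> real) set" where
  "euclid_space d = {v. \<forall>i\<ge>d. v i = 0}"

definition manifold_interior :: "nat \<Rightarrow> 'a::topological_space set \<Rightarrow> 'a set" where
  "manifold_interior d S = {x \<in> S. \<exists>U V. openin (top_of_set S) U \<and> x \<in> U \<and>
       openin (top_of_set (euclid_space d)) V \<and> U homeomorphic V}"

definition manifold_boundary :: "nat \<Rightarrow> 'a::topological_space set \<Rightarrow> 'a set" where
  "manifold_boundary d S = S - manifold_interior d S"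

end

theory Submission
  imports Defs "HOL-Homology.Invariance_of_Domain"
begin

text \<open>Since the evaluation map of a simple problem is injective on every Pareto set, a point that is
Pareto optimal for \<open>h\<close> is Pareto optimal for every \<open>g \<supseteq> h\<close>. Pick an objective \<open>j \<in> g - h\<close>. On the
Pareto front of \<open>g\<close> the value of \<open>j\<close> is determined by the other \<open>card g - 1\<close> values, so forgetting \<open>j\<close>
embeds the front continuously and injectively into \<open>\<real>\<^sup>d\<close>, \<open>d = card g - 1\<close>. By invariance of domain a
manifold interior point is sent to an interior point of the image; from there one can decrease all
remaining objectives simultaneously and stay on the front, which is impossible at a point that is
Pareto optimal for \<open>h\<close>.\<close>

definition dominates :: "'n objective set \<Rightarrow> real^'n \<Rightarrow> real^'n \<Rightarrow> bool" where
  "dominates g x y \<longleftrightarrow> (\<forall>\<phi>\<in>g. \<phi> x \<le> \<phi> y) \<and> (\<exists>\<phi>\<in>g. \<phi> x < \<phi> y)"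

lemma mem_pareto_set_iff:
  "y \<in> pareto_set X g \<longleftrightarrow> g \<noteq> {} \<and> y \<in> X \<and> (\<forall>x\<in>X. \<not> dominates g x y)"
  by (auto simp: pareto_set_def dominates_def)

lemma pareto_set_subset: "pareto_set X g \<subseteq> X"
  by (auto simp: mem_pareto_set_iff)

lemma simple_problem_inj_on_eval_map:
  assumes "simple_problem X f" "g \<subseteq> f"
  shows "inj_on (eval_map g) (pareto_set X g)"
proof -
  obtain e' where "homeomorphism (pareto_set X g) (eval_map g ` pareto_set X g) (eval_map g) e'"
    using assms unfolding simple_problem_def by blast
  then show ?thesis by (metis homeomorphism_apply1 inj_on_inverseI)
qed

lemma eval_map_eq_iff: "eval_map g x = eval_map g y \<longleftrightarrow> (\<forall>\<phi>\<in>g. \<phi> x = \<phi> y)"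
  by (auto simp: eval_map_def fun_eq_iff)

lemma pareto_set_if_equal_values:
  assumes "y \<in> pareto_set X h" "x \<in> X" "\<forall>\<phi>\<in>h. \<phi> x = \<phi> y"
  shows "x \<in> pareto_set X h"
proof -
  have "dominates h z x \<longleftrightarrow> dominates h z y" for z
    using assms(3) unfolding dominates_def by metis
  then show ?thesis
    using assms(1,2) by (simp add: mem_pareto_set_iff)
qed

lemma pareto_set_mono:
  assumes inj: "inj_on (eval_map h) (pareto_set X h)" and "h \<subseteq> g"
  shows "pareto_set X h \<subseteq> pareto_set X g"
proof
  fix y assume y: "y \<in> pareto_set X h"
  show "y \<in> pareto_set X g"
  proof (rule ccontr)
    assume "y \<notin> pareto_set X g"
    then obtain x where x: "x \<in> X" "dominates g x y"
      using y \<open>h \<subseteq> g\<close> by (auto simp: mem_pareto_set_iff)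
    then have "\<forall>\<phi>\<in>h. \<phi> x \<le> \<phi> y" "\<not> dominates h x y"
      using y \<open>h \<subseteq> g\<close> by (auto simp: mem_pareto_set_iff dominates_def)
    then have "\<forall>\<phi>\<in>h. \<phi> x = \<phi> y"
      by (force simp: dominates_def)
    then have "x = y"
      using inj y pareto_set_if_equal_values[OF y \<open>x \<in> X\<close>] by (metis eval_map_eq_iff inj_onD)
    with x show False by (simp add: dominates_def)
  qed
qed

lemma pareto_set_eq_if_agree_but_one:
  assumes inj: "inj_on (eval_map g) (pareto_set X g)"
    and x: "x \<in> pareto_set X g" and x': "x' \<in> pareto_set X g" and "j \<in> g"
    and agree: "\<forall>\<phi>\<in>g - {j}. \<phi> x = \<phi> x'"
  shows "x = x'"
proof -
  have dom: "dominates g a b" if "\<forall>\<phi>\<in>g - {j}. \<phi> a = \<phi> b" "j a < j b" for a b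
    using that \<open>j \<in> g\<close> unfolding dominates_def by (metis Diff_iff order.refl less_imp_le singletonD)
  have "\<not> dominates g x x'" "\<not> dominates g x' x"
    using x x' by (auto simp: mem_pareto_set_iff)
  then have "j x = j x'"
    using dom[of x x'] dom[of x' x] agree by (metis linorder_neqE_linordered_idom)
  then have "\<forall>\<phi>\<in>g. \<phi> x = \<phi> x'"
    using agree by auto
  then show ?thesis
    using inj x x' by (metis eval_map_eq_iff inj_onD)
qed

lemma Euclidean_space_eq_euclid_space: "Euclidean_space d = top_of_set (euclid_space d)"
  by (simp add: Euclidean_space_def euclid_space_def euclidean_product_topology)

lemma manifold_interior_image_interior:
  fixes \<psi> :: "'a::topological_space \<Rightarrow> nat \<Rightarrow> real"
  assumes p: "p \<in> manifold_interior d S" and cont: "continuous_on S \<psi>" and inj: "inj_on \<psi> S"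
    and into: "\<psi> ` S \<subseteq> euclid_space d"
  obtains T where "open T" "\<psi> p \<in> T" "T \<inter> euclid_space d \<subseteq> \<psi> ` S"
proof -
  obtain U V where U: "openin (top_of_set S) U" "p \<in> U"
    and V: "openin (top_of_set (euclid_space d)) V" and "U homeomorphic V"
    using p by (auto simp: manifold_interior_def)
  then obtain a b where hom: "homeomorphism U V a b"
    using homeomorphic_def by blast
  have "U \<subseteq> S" "V \<subseteq> euclid_space d"
    using U V by (auto dest: openin_imp_subset)
  have bV: "b ` V = U"
    using hom by (simp add: homeomorphism_def)
  have "continuous_on V (\<psi> \<circ> b)"
    using hom cont \<open>U \<subseteq> S\<close> bV
    by (metis continuous_on_compose continuous_on_subset homeomorphism_def)
  moreover have "(\<psi> \<circ> b) ` V \<subseteq> euclid_space d"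
    using into bV \<open>U \<subseteq> S\<close> by auto
  ultimately have cm: "continuous_map (subtopology (Euclidean_space d) V) (Euclidean_space d) (\<psi> \<circ> b)"
    using \<open>V \<subseteq> euclid_space d\<close>
    by (auto simp: Euclidean_space_eq_euclid_space subtopology_subtopology inf.absorb2
        continuous_map_in_subtopology)
  have inj_comp: "inj_on (\<psi> \<circ> b) V"
    using inj_on_subset[OF inj \<open>U \<subseteq> S\<close>] hom bV
    by (metis comp_inj_on homeomorphism_apply2 inj_on_inverseI)
  have "openin (Euclidean_space d) ((\<psi> \<circ> b) ` V)"
    by (rule invariance_of_domain_Euclidean_space[OF _ cm inj_comp])
      (simp add: Euclidean_space_eq_euclid_space V)
  moreover have "(\<psi> \<circ> b) ` V = \<psi> ` U"
    using bV by (metis image_comp)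
  ultimately have "openin (top_of_set (euclid_space d)) (\<psi> ` U)"
    by (metis Euclidean_space_eq_euclid_space)
  then obtain T where "open T" and T: "\<psi> ` U = euclid_space d \<inter> T"
    by (meson openin_open)
  show thesis
  proof (rule that[OF \<open>open T\<close>])
    show "\<psi> p \<in> T"
      using T U(2) by (metis IntD2 imageI)
    show "T \<inter> euclid_space d \<subseteq> \<psi> ` S"
      using T \<open>U \<subseteq> S\<close> by (metis Int_commute image_mono)
  qed
qed

lemma open_contains_segment_start:
  fixes T :: "('a \<Rightarrow> real) set"
  assumes "open T" "p \<in> T"
  obtains t where "t > 0" "(\<lambda>i. p i - t * v i) \<in> T"
proof -
  define \<gamma> where "\<gamma> = (\<lambda>t::real. \<lambda>i. p i - t * v i)"
  have "continuous_on UNIV \<gamma>"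
    unfolding \<gamma>_def by (intro continuous_on_coordinatewise_then_product continuous_intros)
  then have "open (\<gamma> -` T)" "0 \<in> \<gamma> -` T"
    using assms by (auto simp: \<gamma>_def open_vimage)
  then obtain r where "r > 0" "ball 0 r \<subseteq> \<gamma> -` T"
    by (meson open_contains_ball)
  moreover have "r / 2 \<in> ball 0 r"
    using \<open>r > 0\<close> by simp
  ultimately have "\<gamma> (r / 2) \<in> T"
    by blast
  then show thesis
    using that[of "r / 2"] \<open>r > 0\<close> by (simp add: \<gamma>_def)
qed

definition coord_proj :: "nat \<Rightarrow> (nat \<Rightarrow> 'a) \<Rightarrow> ('a \<Rightarrow> real) \<Rightarrow> nat \<Rightarrow> real" where
  "coord_proj d e q = (\<lambda>n. if n < d then q (e n) else 0)"

lemma coord_proj_in_euclid_space: "coord_proj d e q \<in> euclid_space d"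
  by (simp add: coord_proj_def euclid_space_def)

lemma continuous_on_coord_proj: "continuous_on A (coord_proj d e)"
  unfolding coord_proj_def
proof (intro continuous_on_coordinatewise_then_product)
  fix n
  show "continuous_on A (\<lambda>q. if n < d then q (e n) else 0)"
    by (cases "n < d") (auto intro: continuous_on_product_then_coordinatewise[OF continuous_on_id])
qed

lemma inj_on_coord_proj_pareto_front:
  assumes inj: "inj_on (eval_map g) (pareto_set X g)" and "g \<subseteq> f" "j \<in> g"
    and e: "bij_betw e {..<d} (g - {j})"
  shows "inj_on (coord_proj d e) (eval_map f ` pareto_set X g)"
proof (rule inj_onI)
  fix q q' assume "q \<in> eval_map f ` pareto_set X g" "q' \<in> eval_map f ` pareto_set X g"
    and eq: "coord_proj d e q = coord_proj d e q'"
  then obtain x x' where x: "x \<in> pareto_set X g" "q = eval_map f x"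
    and x': "x' \<in> pareto_set X g" "q' = eval_map f x'"
    by blast
  have "\<phi> x = \<phi> x'" if "\<phi> \<in> g - {j}" for \<phi>
  proof -
    have "\<phi> \<in> e ` {..<d}"
      using e that by (simp add: bij_betw_def)
    then obtain n where "n < d" "\<phi> = e n"
      by auto
    then show ?thesis
      using fun_cong[OF eq, of n] that x x' \<open>g \<subseteq> f\<close> by (auto simp: coord_proj_def eval_map_def)
  qed
  then show "q = q'"
    using pareto_set_eq_if_agree_but_one[OF inj x(1) x'(1) \<open>j \<in> g\<close>] x x' by simp
qed

lemma pareto_front_interior_descent:
  assumes inj: "inj_on (eval_map g) (pareto_set X g)" and "finite g" "g \<subseteq> f" "j \<in> g"
    and interior: "eval_map f y \<in> manifold_interior (card g - 1) (eval_map f ` pareto_set X g)"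
  obtains x where "x \<in> pareto_set X g" "\<forall>\<phi>\<in>g - {j}. \<phi> x < \<phi> y"
proof -
  define d where "d = card g - 1"
  define S where "S = eval_map f ` pareto_set X g"
  obtain e where e: "bij_betw e {..<d} (g - {j})"
    using ex_bij_betw_nat_finite[of "g - {j}"] \<open>finite g\<close> \<open>j \<in> g\<close>
    by (auto simp: d_def atLeast0LessThan)
  have "inj_on (coord_proj d e) S"
    unfolding S_def by (rule inj_on_coord_proj_pareto_front[OF inj \<open>g \<subseteq> f\<close> \<open>j \<in> g\<close> e])
  moreover have "coord_proj d e ` S \<subseteq> euclid_space d"
    using coord_proj_in_euclid_space by blast
  moreover have "eval_map f y \<in> manifold_interior d S"
    using interior by (simp add: S_def d_def)
  ultimately obtain T where T_open: "open T" and yT: "coord_proj d e (eval_map f y) \<in> T"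
    and T: "T \<inter> euclid_space d \<subseteq> coord_proj d e ` S"
    using manifold_interior_image_interior continuous_on_coord_proj by metis
  obtain t where "t > 0"
    and shifted: "(\<lambda>n. coord_proj d e (eval_map f y) n - t * (if n < d then 1 else 0)) \<in> T"
    by (rule open_contains_segment_start[OF T_open yT])
  have "(\<lambda>n. coord_proj d e (eval_map f y) n - t * (if n < d then 1 else 0))
      = coord_proj d e (\<lambda>\<phi>. eval_map f y \<phi> - t)"
    by (auto simp: coord_proj_def)
  with shifted have "coord_proj d e (\<lambda>\<phi>. eval_map f y \<phi> - t) \<in> T"
    by (simp only:)
  then have "coord_proj d e (\<lambda>\<phi>. eval_map f y \<phi> - t) \<in> coord_proj d e ` S"
    by (intro subsetD[OF T] IntI coord_proj_in_euclid_space)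
  then obtain x where x: "x \<in> pareto_set X g"
    and eq: "coord_proj d e (eval_map f x) = coord_proj d e (\<lambda>\<phi>. eval_map f y \<phi> - t)"
    unfolding S_def by auto
  have "\<phi> x = \<phi> y - t" if "\<phi> \<in> g - {j}" for \<phi>
  proof -
    have "\<phi> \<in> e ` {..<d}"
      using e that by (simp add: bij_betw_def)
    then obtain n where "n < d" "\<phi> = e n"
      by auto
    then show ?thesis
      using fun_cong[OF eq, of n] that \<open>g \<subseteq> f\<close> by (auto simp: coord_proj_def eval_map_def)
  qed
  then have "\<forall>\<phi>\<in>g - {j}. \<phi> x < \<phi> y"
    using \<open>t > 0\<close> by fastforce
  with x show thesis
    by (rule that)
qed

theorem lemma3:
  fixes X :: "(real^'n) set" and f g h :: "'n objective set"
  assumes "simple_problem X f" and "h \<subset> g" and "g \<subseteq> f"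
  shows "eval_map f ` pareto_set X h
           \<subseteq> manifold_boundary (card g - 1) (eval_map f ` pareto_set X g)"
proof
  fix q assume "q \<in> eval_map f ` pareto_set X h"
  then obtain y where y: "y \<in> pareto_set X h" and q: "q = eval_map f y"
    by blast
  have inj_g: "inj_on (eval_map g) (pareto_set X g)"
    using assms(1,3) by (rule simple_problem_inj_on_eval_map)
  have "pareto_set X h \<subseteq> pareto_set X g"
    using assms simple_problem_inj_on_eval_map[of X f h] by (intro pareto_set_mono) auto
  with y q have q_front: "q \<in> eval_map f ` pareto_set X g"
    by blast
  have "finite g"
    using assms(1,3) finite_subset by (auto simp: simple_problem_def)
  obtain j where j: "j \<in> g" "j \<notin> h"
    using assms(2) by blast
  have "q \<notin> manifold_interior (card g - 1) (eval_map f ` pareto_set X g)"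
  proof
    assume "q \<in> manifold_interior (card g - 1) (eval_map f ` pareto_set X g)"
    then obtain x where "x \<in> pareto_set X g" "\<forall>\<phi>\<in>g - {j}. \<phi> x < \<phi> y"
      unfolding q by (rule pareto_front_interior_descent[OF inj_g \<open>finite g\<close> assms(3) j(1)])
    moreover have "h \<subseteq> g - {j}" "h \<noteq> {}"
      using assms(2) j y by (auto simp: mem_pareto_set_iff)
    ultimately have "dominates h x y"
      unfolding dominates_def by (meson less_imp_le subsetD ex_in_conv)
    then show False
      using y \<open>x \<in> pareto_set X g\<close> pareto_set_subset by (auto simp: mem_pareto_set_iff)
  qed
  with q_front show "q \<in> manifold_boundary (card g - 1) (eval_map f ` pareto_set X g)"
    by (simp add: manifold_boundary_def)
qed

end
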